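(* Consider the parameterized unitary channel $\mathcal{E}_\theta(A) = U(\theta)^\dagger A U(\theta)$ with a real parameter $\theta \in \mathbb{R}$, where $U(\theta) = \prod_{k=1}^K V_k e^{-i\theta H_k}$, $\{H_k\}_{k=1}^K$ is a set of $K$ Hermitian operators (Hamiltonians, not necessarily commuting) and $\{V_k\}_{k=1}^K$ are unitaries that do not depend on $\theta$. Define the unitary channels $\widetilde{\mathcal{U}}_{\theta,k}(A) := e^{i\theta H_k} V_k^\dagger A V_k e^{-i\theta H_k}$, and let $\widetilde{\mathcal{U}}_{\phi,k}^{(a_k)}(A)$ denote the $a_k$-th order derivative of $\widetilde{\mathcal{U}}_{\theta,k}(A)$ with respect to $\theta$ evaluated at $\theta=\phi$. Then the $p$-th order derivative of $\mathcal{E}_\theta(A)$ with respect to $\theta$ evaluated at $\phi\in\mathbb{R}$ is $$\mathcal{E}_\phi^{(p)}(A) := \frac{d^p}{d\theta^p}\mathcal{E}_\theta(A)\Big|_{\theta=\phi} = \sum_{\substack{\vec{a}=(a_1,\dots,a_K)\\ a_1+\dots+a_K=p}} \binom{p}{\vec{a}}\, \widetilde{\mathcal{U}}_{\phi,K}^{(a_K)}\circ \widetilde{\mathcal{U}}_{\phi,K-1}^{(a_{K-1})}\circ\dots\circ \widetilde{\mathcal{U}}_{\phi,1}^{(a_1)}(A),$$ where the sum is over nonnegative integers $a_k$ and $\binom{p}{\vec{a}} = \frac{p!}{a_1!\cdots a_K!}$ is the multinomial coefficient. Moreover, for any bounded operator $A$, $$\left\|\mathcal{E}_\phi^{(p)}(A)\right\|_\infty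 \le \left(\sum_{k=1}^K 2\,\omega^{(\max)}(H_k)\right)^p \|A\|_\infty,$$ where $\omega^{(\max)}(H) := |\lambda_{\max}(H)-\lambda_{\min}(H)|$ is the difference between the largest and smallest eigenvalues of $H$.
   Context: $\|\cdot\|_\infty$ denotes the operator (spectral) norm. The channel $\mathcal{E}_\theta$ equals the composition $\widetilde{\mathcal{U}}_{\theta,K}\circ\cdots\circ\widetilde{\mathcal{U}}_{\theta,1}$. *)

theory Defs
  imports "HOL-Analysis.Analysis"
begin

type_synonym 'n cmat = "complex^'n^'n"

definition adj :: "'n::finite cmat \<Rightarrow> 'n cmat" where
  "adj A = (\<chi> i j. cnj (A $ j $ i))"

definition hermitian :: "'n::finite cmat \<Rightarrow> bool" where
  "hermitian H \<longleftrightarrow> adj H = H"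

definition unitary :: "'n::finite cmat \<Rightarrow> bool" where
  "unitary V \<longleftrightarrow> adj V ** V = mat 1 \<and> V ** adj V = mat 1"

definition cscale :: "complex \<Rightarrow> 'n::finite cmat \<Rightarrow> 'n cmat" where
  "cscale c A = (\<chi> i j. c * A $ i $ j)"

fun mpow :: "'n::finite cmat \<Rightarrow> nat \<Rightarrow> 'n cmat" where
  "mpow A 0 = mat 1"
| "mpow A (Suc k) = A ** mpow A k"

definition mexp :: "'n::finite cmat \<Rightarrow> 'n cmat" where
  "mexp X = (\<Sum>k. (1 / fact k) *\<^sub>R mpow X k)"

text \<open>Operator (spectral) norm: the operator norm w.r.t. the Euclidean norm on complex^n.\<close>
definition opnorm :: "'n::finite cmat \<Rightarrow> real" where
  "opnorm A = onorm (\<lambda>x. A *v x)"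

definition eigenvalues :: "'n::finite cmat \<Rightarrow> complex set" where
  "eigenvalues H = {c. \<exists>v. v \<noteq> 0 \<and> H *v v = c *s v}"

text \<open>omega_max(H) = |lambda_max(H) - lambda_min(H)| (eigenvalues of a Hermitian H are real).\<close>
definition omega_max :: "'n::finite cmat \<Rightarrow> real" where
  "omega_max H = \<bar>Max (Re ` eigenvalues H) - Min (Re ` eigenvalues H)\<bar>"

fun nth_deriv :: "nat \<Rightarrow> (real \<Rightarrow> 'a::real_normed_vector) \<Rightarrow> real \<Rightarrow> 'a" where
  "nth_deriv 0 f = f"
| "nth_deriv (Suc n) f = (\<lambda>t. vector_derivative (nth_deriv n f) (at t))"

text \<open>U(theta) = prod_{k=1}^K V_k e^{-i theta H_k}, with k = 1 the leftmost factor.\<close>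
definition Uparam :: "nat \<Rightarrow> (nat \<Rightarrow> 'n::finite cmat) \<Rightarrow> (nat \<Rightarrow> 'n cmat) \<Rightarrow> real \<Rightarrow> 'n cmat" where
  "Uparam K V H \<theta> =
     foldl (\<lambda>M k. M ** (V k ** mexp (cscale (- \<i> * complex_of_real \<theta>) (H k)))) (mat 1) [1..<K+1]"

definition Echan :: "nat \<Rightarrow> (nat \<Rightarrow> 'n::finite cmat) \<Rightarrow> (nat \<Rightarrow> 'n cmat) \<Rightarrow> real \<Rightarrow> 'n cmat \<Rightarrow> 'n cmat" where
  "Echan K V H \<theta> A = adj (Uparam K V H \<theta>) ** A ** Uparam K V H \<theta>"

definition Utilde :: "(nat \<Rightarrow> 'n::finite cmat) \<Rightarrow> (nat \<Rightarrow> 'n cmat) \<Rightarrow> real \<Rightarrow> nat \<Rightarrow> 'n cmat \<Rightarrow> 'n cmat" where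
  "Utilde V H \<theta> k A =
     mexp (cscale (\<i> * complex_of_real \<theta>) (H k)) ** adj (V k) ** A ** V k
       ** mexp (cscale (- \<i> * complex_of_real \<theta>) (H k))"

definition Utilde_deriv :: "(nat \<Rightarrow> 'n::finite cmat) \<Rightarrow> (nat \<Rightarrow> 'n cmat) \<Rightarrow> nat \<Rightarrow> real \<Rightarrow> nat \<Rightarrow> 'n cmat \<Rightarrow> 'n cmat" where
  "Utilde_deriv V H a \<phi> k A = nth_deriv a (\<lambda>\<theta>. Utilde V H \<theta> k A) \<phi>"

definition comp_derivs :: "nat \<Rightarrow> (nat \<Rightarrow> 'n::finite cmat) \<Rightarrow> (nat \<Rightarrow> 'n cmat) \<Rightarrow> (nat \<Rightarrow> nat) \<Rightarrow> real \<Rightarrow> 'n cmat \<Rightarrow> 'n cmat" where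
  "comp_derivs K V H a \<phi> A = foldl (\<lambda>B k. Utilde_deriv V H (a k) \<phi> k B) A [1..<K+1]"

definition multi_indices :: "nat \<Rightarrow> nat \<Rightarrow> (nat \<Rightarrow> nat) set" where
  "multi_indices K p = {a. (\<forall>k. k \<notin> {1..K} \<longrightarrow> a k = 0) \<and> (\<Sum>k=1..K. a k) = p}"

definition multinom :: "nat \<Rightarrow> nat \<Rightarrow> (nat \<Rightarrow> nat) \<Rightarrow> real" where
  "multinom K p a = fact p / (\<Prod>k=1..K. fact (a k))"

end

theory Submission
  imports Defs
begin

text \<open>
  Write \<open>X\<^sub>k = i H\<^sub>k\<close>. Differentiating \<open>e\<^bsup>\<theta>X\<^esup> B e\<^bsup>-\<theta>X\<^esup>\<close> produces the commutator
  \<open>[X, B]\<close> inside the conjugation, so the \<open>a\<close>-th derivative of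
  \<open>Utilde\<^sub>\<theta>\<^sub>,\<^sub>k(A)\<close> is \<open>e\<^bsup>\<theta>X\<^sub>k\<^esup> ad\<^bsub>X\<^sub>k\<^esub>\<^sup>a(V\<^sub>k\<^sup>\<dagger> A V\<^sub>k) e\<^bsup>-\<theta>X\<^sub>k\<^esup>\<close>
  (\<open>Utilde_ad\<close> below). Since \<open>E\<^sub>\<theta>\<close> for \<open>K + 1\<close> factors is \<open>Utilde\<^sub>\<theta>\<^sub>,\<^sub>K\<^sub>+\<^sub>1\<close> applied to
  \<open>E\<^sub>\<theta>\<close> for \<open>K\<close> factors, the Leibniz rule for a smooth family of linear maps applied to a
  smooth function gives a binomial expansion of the \<open>p\<close>-th derivative, and induction on \<open>K\<close>
  merges the nested binomial sums into the multinomial sum.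

  For the bound, conjugation by unitaries does not increase the operator norm, and if \<open>c\<close> is
  the midpoint of the spectrum of the Hermitian \<open>H\<close> then
  \<open>\<parallel>[H, Z]\<parallel> = \<parallel>[H - c, Z]\<parallel> \<le> 2 \<parallel>H - c\<parallel> \<parallel>Z\<parallel> = \<omega>(H) \<parallel>Z\<parallel>\<close>. The binomial theorem then
  bounds the \<open>p\<close>-th derivative by \<open>(\<Sum>\<^sub>k \<omega>(H\<^sub>k))\<^sup>p \<parallel>A\<parallel>\<close>, which is \<open>2\<^sup>p\<close> times better than
  the stated bound.
\<close>

section \<open>Matrix algebra\<close>

lemma bounded_bilinear_matrix_matrix_mult:
  "bounded_bilinear ((**) :: 'a::{real_algebra_1,euclidean_space}^'n^'m \<Rightarrow> 'a^'p^'n \<Rightarrow> 'a^'p^'m)"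
proof -
  have "bilinear ((**) :: 'a^'n^'m \<Rightarrow> 'a^'p^'n \<Rightarrow> 'a^'p^'m)"
    unfolding bilinear_def
    by (auto intro!: linearI simp: matrix_add_ldistrib)
      (vector matrix_matrix_mult_def sum.distrib sum_distrib_left distrib_right scaleR_sum_right)+
  then show ?thesis
    by (simp add: bilinear_conv_bounded_bilinear)
qed

interpretation matrix_mult: bounded_bilinear
  "(**) :: 'a::{real_algebra_1,euclidean_space}^'n^'m \<Rightarrow> 'a^'p^'n \<Rightarrow> 'a^'p^'m"
  by (rule bounded_bilinear_matrix_matrix_mult)

lemma bounded_bilinear_matrix_vector_mult:
  "bounded_bilinear ((*v) :: 'a::{real_algebra_1,euclidean_space}^'n^'m \<Rightarrow> 'a^'n \<Rightarrow> 'a^'m)"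
proof -
  have "bilinear ((*v) :: 'a^'n^'m \<Rightarrow> 'a^'n \<Rightarrow> 'a^'m)"
    unfolding bilinear_def
    by (auto intro!: linearI simp: matrix_vector_right_distrib matrix_vector_mult_add_rdistrib)
      (vector matrix_vector_mult_def scaleR_sum_right)+
  then show ?thesis
    by (simp add: bilinear_conv_bounded_bilinear)
qed

interpretation matrix_vector_mult: bounded_bilinear
  "(*v) :: 'a::{real_algebra_1,euclidean_space}^'n^'m \<Rightarrow> 'a^'n \<Rightarrow> 'a^'m"
  by (rule bounded_bilinear_matrix_vector_mult)

lemma adj_adj [simp]: "adj (adj A) = A"
  by (simp add: adj_def vec_eq_iff)

lemma adj_matrix_mult: "adj (A ** B) = adj B ** adj A"
  by (simp add: adj_def vec_eq_iff matrix_matrix_mult_def mult.commute)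

lemma adj_mat [simp]: "adj (mat c) = mat (cnj c)"
  by (simp add: adj_def mat_def vec_eq_iff)

lemma adj_uminus: "adj (- A) = - adj A"
  by (simp add: adj_def vec_eq_iff)

lemma adj_cscale: "adj (cscale c A) = cscale (cnj c) (adj A)"
  by (simp add: adj_def vec_eq_iff cscale_def)

lemma bounded_linear_adj: "bounded_linear (adj :: 'n::finite cmat \<Rightarrow> 'n cmat)"
proof -
  have "linear (adj :: 'n cmat \<Rightarrow> 'n cmat)"
    by (auto intro!: linearI simp: adj_def vec_eq_iff complex_cnj_scaleR)
  then show ?thesis
    by (simp add: linear_conv_bounded_linear)
qed

lemma cscale_mult_of_real: "cscale (c * of_real t) A = t *\<^sub>R cscale c A"
  unfolding cscale_def by (vector scaleR_conv_of_real)

lemma cscale_uminus: "cscale (- c) A = - cscale c A"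
  by (simp add: cscale_def vec_eq_iff)

lemma unitary_adj: "unitary U \<Longrightarrow> unitary (adj U)"
  by (simp add: unitary_def)

definition commutator :: "'n::finite cmat \<Rightarrow> 'n cmat \<Rightarrow> 'n cmat" where
  "commutator X Z = X ** Z - Z ** X"

lemma bounded_linear_commutator: "bounded_linear (commutator X)"
  unfolding commutator_def
  by (intro bounded_linear_sub matrix_mult.bounded_linear_left matrix_mult.bounded_linear_right)

lemma commutator_cscale: "commutator (cscale c X) Z = cscale c (commutator X Z)"
  by (simp add: commutator_def vec_eq_iff cscale_def matrix_matrix_mult_def sum_distrib_left
      right_diff_distrib mult_ac)

lemma mpow_Suc_right: "mpow A (Suc k) = mpow A k ** A"
  by (induction k) (auto simp: matrix_mul_assoc)

lemma mpow_scaleR: "mpow (r *\<^sub>R A) k = (r ^ k) *\<^sub>R mpow A k"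
  by (induction k) (auto simp: matrix_mult.scaleR_left matrix_mult.scaleR_right)

lemma adj_mpow: "adj (mpow A k) = mpow (adj A) k"
  by (induction k) (simp_all add: adj_matrix_mult, metis mpow.simps(2) mpow_Suc_right)

text \<open>The real inner product of \<^typ>\<open>complex^'n\<close> is the real part of the Hermitian one
  below, which is needed to see that eigenvalues of Hermitian matrices are real.\<close>

definition cinner :: "complex^'n::finite \<Rightarrow> complex^'n \<Rightarrow> complex" where
  "cinner x y = (\<Sum>i\<in>UNIV. x $ i * cnj (y $ i))"

lemma inner_eq_Re_cinner: "inner x y = Re (cinner x y)"
  by (simp add: cinner_def inner_vec_def inner_complex_def)

lemma cinner_self: "cinner x x = of_real ((norm x)\<^sup>2)"
proof -
  have "cinner x x = (\<Sum>i\<in>UNIV. of_real ((norm (x $ i))\<^sup>2))"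
    unfolding cinner_def by (intro sum.cong refl) (metis complex_norm_square)
  also have "\<dots> = of_real ((norm x)\<^sup>2)"
    by (simp add: norm_vec_def L2_set_def sum_nonneg)
  finally show ?thesis .
qed

lemma cinner_smult_left: "cinner (c *s x) y = c * cinner x y"
  by (simp add: cinner_def sum_distrib_left mult.assoc)

lemma cinner_smult_right: "cinner x (c *s y) = cnj c * cinner x y"
  by (simp add: cinner_def sum_distrib_left mult.assoc mult.left_commute)

lemma cinner_adj: "cinner (A *v x) y = cinner x (adj A *v y)"
proof -
  have "cinner (A *v x) y = (\<Sum>i\<in>UNIV. \<Sum>j\<in>UNIV. A $ i $ j * x $ j * cnj (y $ i))"
    by (simp add: cinner_def matrix_vector_mult_def sum_distrib_right)
  also have "\<dots> = (\<Sum>j\<in>UNIV. \<Sum>i\<in>UNIV. x $ j * cnj (cnj (A $ i $ j) * y $ i))"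
    by (subst sum.swap) (simp add: mult.commute mult.left_commute)
  also have "\<dots> = cinner x (adj A *v y)"
    by (simp add: cinner_def matrix_vector_mult_def adj_def sum_distrib_left)
  finally show ?thesis .
qed

lemma inner_adj: "inner (A *v x) y = inner x (adj A *v y)"
  by (simp add: inner_eq_Re_cinner cinner_adj)

section \<open>The operator norm\<close>

lemma opnorm_apply_le: "norm (A *v x) \<le> opnorm A * norm x"
  unfolding opnorm_def by (rule onorm) simp

lemma opnorm_nonneg: "0 \<le> opnorm A"
  unfolding opnorm_def by (rule onorm_pos_le) simp

lemma opnorm_leI: "(\<And>x. norm (A *v x) \<le> b * norm x) \<Longrightarrow> opnorm A \<le> b"
  unfolding opnorm_def by (rule onorm_le)

lemma opnorm_zero [simp]: "opnorm 0 = 0"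
  by (simp add: opnorm_def onorm_zero)

lemma opnorm_matrix_mult_le: "opnorm (A ** B) \<le> opnorm A * opnorm B"
  unfolding opnorm_def
  using onorm_compose[of "(*v) A" "(*v) B"] by (simp add: o_def matrix_vector_mul_assoc)

lemma opnorm_add_le: "opnorm (A + B) \<le> opnorm A + opnorm B"
proof (rule opnorm_leI)
  fix x
  have "norm ((A + B) *v x) \<le> norm (A *v x) + norm (B *v x)"
    by (simp add: matrix_vector_mult.add_left norm_triangle_ineq)
  then show "norm ((A + B) *v x) \<le> (opnorm A + opnorm B) * norm x"
    using opnorm_apply_le[of A x] opnorm_apply_le[of B x] by (simp add: distrib_right)
qed

lemma opnorm_diff_le: "opnorm (A - B) \<le> opnorm A + opnorm B"
proof (rule opnorm_leI)
  fix x
  have "norm ((A - B) *v x) \<le> norm (A *v x) + norm (B *v x)"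
    by (simp add: matrix_vector_mult.diff_left norm_triangle_ineq4)
  then show "norm ((A - B) *v x) \<le> (opnorm A + opnorm B) * norm x"
    using opnorm_apply_le[of A x] opnorm_apply_le[of B x] by (simp add: distrib_right)
qed

lemma opnorm_scaleR: "opnorm (r *\<^sub>R A) = \<bar>r\<bar> * opnorm A"
proof -
  have "(*v) (r *\<^sub>R A) = (\<lambda>x. r *\<^sub>R (A *v x))"
    by (simp add: fun_eq_iff matrix_vector_mult.scaleR_left)
  then show ?thesis
    unfolding opnorm_def by (simp add: onorm_scaleR)
qed

lemma opnorm_sum_le: "finite I \<Longrightarrow> opnorm (\<Sum>i\<in>I. A i) \<le> (\<Sum>i\<in>I. opnorm (A i))"
  by (induction I rule: finite_induct) (auto intro: order_trans[OF opnorm_add_le])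

lemma opnorm_cscale_le: "opnorm (cscale c A) \<le> cmod c * opnorm A"
proof (rule opnorm_leI)
  fix x
  have "norm (cscale c A *v x) = cmod c * norm (A *v x)"
    by (simp add: cscale_def matrix_vector_mult_def norm_vec_def L2_set_def norm_mult
        power_mult_distrib sum_distrib_left[symmetric] real_sqrt_mult mult.assoc)
  then show "norm (cscale c A *v x) \<le> cmod c * opnorm A * norm x"
    by (simp add: mult.assoc mult_left_mono opnorm_apply_le)
qed

lemma opnorm_unitary_le:
  assumes "unitary U"
  shows "opnorm U \<le> 1"
proof (rule opnorm_leI)
  fix x
  have "inner (U *v x) (U *v x) = inner x x"
    using assms by (simp add: inner_adj matrix_vector_mul_assoc unitary_def)
  then show "norm (U *v x) \<le> 1 * norm x"
    by (simp add: norm_eq_sqrt_inner)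
qed

lemma opnorm_unitary_conj_le:
  assumes "unitary U" "unitary W"
  shows "opnorm (U ** A ** W) \<le> opnorm A"
proof -
  have "opnorm (U ** A ** W) \<le> opnorm (U ** A) * opnorm W"
    by (rule opnorm_matrix_mult_le)
  also have "\<dots> \<le> opnorm (U ** A)"
    by (rule mult_left_le[OF opnorm_unitary_le[OF assms(2)] opnorm_nonneg])
  also have "\<dots> \<le> opnorm U * opnorm A"
    by (rule opnorm_matrix_mult_le)
  also have "\<dots> \<le> opnorm A"
    by (rule mult_left_le_one_le[OF opnorm_nonneg opnorm_nonneg opnorm_unitary_le[OF assms(1)]])
  finally show ?thesis .
qed

section \<open>Spectral bounds for Hermitian matrices\<close>

lemma self_adjoint_psd_form_eq_0:
  fixes f :: "'a::real_inner \<Rightarrow> 'a"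
  assumes f: "linear f"
    and self_adjoint: "\<And>x y. inner (f x) y = inner x (f y)"
    and psd: "\<And>x. 0 \<le> inner (f x) x"
    and zero: "inner (f x) x = 0"
  shows "f x = 0"
proof (rule ccontr)
  assume "f x \<noteq> 0"
  define n where "n = inner (f x) (f x)"
  define q where "q = inner (f (f x)) (f x)"
  have "n > 0" using \<open>f x \<noteq> 0\<close> by (simp add: n_def)
  have "q \<ge> 0" using psd by (simp add: q_def)
  have form: "inner (f (x + t *\<^sub>R f x)) (x + t *\<^sub>R f x) = 2 * t * n + t\<^sup>2 * q" for t
    using self_adjoint[of "f x" x] zero
    by (simp add: linear_add[OF f] linear_scale[OF f] inner_add_left inner_add_right
        inner_commute n_def q_def power2_eq_square algebra_simps)
  define t where "t = - n / (q + 1)"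
  have "q + 1 > 0"
    using \<open>q \<ge> 0\<close> by simp
  then have "n * q / (q + 1) \<le> n"
    using \<open>n > 0\<close> by (simp add: pos_divide_le_eq)
  then have "2 * n + t * q > 0"
    using \<open>n > 0\<close> by (simp add: t_def)
  moreover have "t < 0"
    using \<open>n > 0\<close> \<open>q + 1 > 0\<close> by (simp add: t_def)
  ultimately have "t * (2 * n + t * q) < 0"
    by (simp add: mult_neg_pos)
  then show False
    using psd[of "x + t *\<^sub>R f x"] form[of t] by (simp add: power2_eq_square algebra_simps)
qed

lemma self_adjoint_norm_le:
  fixes f :: "'a::real_inner \<Rightarrow> 'a"
  assumes f: "linear f"
    and self_adjoint: "\<And>x y. inner (f x) y = inner x (f y)"
    and form_le: "\<And>x. \<bar>inner (f x) x\<bar> \<le> r * (norm x)\<^sup>2"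
  shows "norm (f x) \<le> r * norm x"
proof (cases "f x = 0")
  case True
  have "0 \<le> r * (norm x)\<^sup>2"
    using form_le[of x] by linarith
  then show ?thesis
    using True by (cases "x = 0") (auto simp: zero_le_mult_iff)
next
  case False
  define y where "y = (norm x / norm (f x)) *\<^sub>R f x"
  have "4 * inner (f x) y = inner (f (x + y)) (x + y) - inner (f (x - y)) (x - y)"
    using self_adjoint[of y x]
    by (simp add: linear_add[OF f] linear_diff[OF f] inner_add_left inner_add_right
        inner_diff_left inner_diff_right inner_commute)
  also have "\<dots> \<le> r * ((norm (x + y))\<^sup>2 + (norm (x - y))\<^sup>2)"
    using form_le[of "x + y"] form_le[of "x - y"] by (simp add: abs_le_iff algebra_simps)
  also have "\<dots> = 2 * r * ((norm x)\<^sup>2 + (norm y)\<^sup>2)"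
    by (simp add: power2_norm_eq_inner inner_add_left inner_add_right inner_diff_left
        inner_diff_right inner_commute algebra_simps)
  finally have "4 * (norm x * norm (f x)) \<le> 4 * (r * norm x * norm x)"
    using False by (simp add: y_def power2_norm_eq_inner[symmetric] power2_eq_square algebra_simps)
  then show ?thesis
    using False by (cases "x = 0") (auto simp: mult.assoc linear_0[OF f])
qed

lemma self_adjoint_max_eigenvalue:
  fixes f :: "'a::euclidean_space \<Rightarrow> 'a"
  assumes f: "linear f"
    and self_adjoint: "\<And>x y. inner (f x) y = inner x (f y)"
  shows "\<exists>\<mu> v. norm v = 1 \<and> f v = \<mu> *\<^sub>R v \<and> (\<forall>x. inner (f x) x \<le> \<mu> * (norm x)\<^sup>2)"
proof -
  have "continuous_on (sphere 0 1) (\<lambda>x. inner (f x) x)"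
    using linear_continuous_on[OF linear_conv_bounded_linear[THEN iffD1, OF f]]
    by (intro continuous_intros)
  moreover have "sphere (0::'a) 1 \<noteq> {}"
    by simp
  ultimately obtain v where v: "v \<in> sphere 0 1"
    and max: "\<And>y. y \<in> sphere 0 1 \<Longrightarrow> inner (f y) y \<le> inner (f v) v"
    using continuous_attains_sup[OF compact_sphere] by blast
  define \<mu> where "\<mu> = inner (f v) v"
  have rayleigh: "inner (f x) x \<le> \<mu> * (norm x)\<^sup>2" for x
  proof (cases "x = 0")
    case True
    then show ?thesis by (simp add: linear_0[OF f])
  next
    case False
    have "inner (f x) x / (norm x)\<^sup>2 \<le> \<mu>"
      using False max[of "x /\<^sub>R norm x"]
      by (simp add: \<mu>_def linear_scale[OF f] power2_eq_square field_simps)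
    then show ?thesis
      using False by (simp add: pos_divide_le_eq)
  qed
  define g where "g y = \<mu> *\<^sub>R y - f y" for y
  have "g v = 0"
  proof (rule self_adjoint_psd_form_eq_0[where f = g])
    show "linear g"
      unfolding g_def by (intro linear_compose_sub linear_scaleR f)
    show "inner (g x) y = inner x (g y)" for x y
      using self_adjoint[of x y] by (simp add: g_def inner_diff_left inner_diff_right inner_commute)
    show "0 \<le> inner (g x) x" for x
      using rayleigh[of x] by (simp add: g_def inner_diff_left power2_norm_eq_inner)
    show "inner (g v) v = 0"
      using v by (simp add: g_def inner_diff_left \<mu>_def norm_eq_1)
  qed
  then show ?thesis
    using v rayleigh by (intro exI[of _ \<mu>] exI[of _ v]) (simp add: g_def)
qed

lemma hermitian_cinner: "hermitian H \<Longrightarrow> cinner (H *v x) y = cinner x (H *v y)"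
  by (simp add: cinner_adj hermitian_def)

lemma hermitian_inner: "hermitian H \<Longrightarrow> inner (H *v x) y = inner x (H *v y)"
  by (simp add: inner_adj hermitian_def)

lemma hermitian_eigenvalue_real:
  assumes "hermitian H" "H *v v = c *s v" "v \<noteq> 0"
  shows "cnj c = c"
proof -
  have "c * cinner v v = cnj c * cinner v v"
    using hermitian_cinner[OF assms(1), of v v] assms(2)
    by (simp add: cinner_smult_left cinner_smult_right)
  then show ?thesis
    using assms(3) by (simp add: cinner_self)
qed

lemma hermitian_eigenvectors_orthogonal:
  assumes H: "hermitian H" and v: "H *v v = c *s v" and w: "H *v w = d *s w" "w \<noteq> 0"
    and "c \<noteq> d"
  shows "inner v w = 0"
proof -
  have "c * cinner v w = cnj d * cinner v w"
    using hermitian_cinner[OF H, of v w] v w(1)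
    by (simp add: cinner_smult_left cinner_smult_right)
  then have "cinner v w = 0"
    using \<open>c \<noteq> d\<close> hermitian_eigenvalue_real[OF H w] by simp
  then show ?thesis
    by (simp add: inner_eq_Re_cinner)
qed

lemma hermitian_eigenvalues_finite:
  assumes H: "hermitian H"
  shows "finite (eigenvalues H)"
proof -
  have "\<forall>c\<in>eigenvalues H. \<exists>v. v \<noteq> 0 \<and> H *v v = c *s v"
    by (simp add: eigenvalues_def)
  from bchoice[OF this] obtain ev
    where ev: "\<And>c. c \<in> eigenvalues H \<Longrightarrow> ev c \<noteq> 0 \<and> H *v ev c = c *s ev c"
    by blast
  have inj: "inj_on ev (eigenvalues H)"
  proof (rule inj_onI)
    fix c d
    assume c: "c \<in> eigenvalues H" and d: "d \<in> eigenvalues H" and "ev c = ev d"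
    have "c *s ev c = H *v ev c"
      using ev[OF c] by simp
    also have "\<dots> = d *s ev c"
      using ev[OF d] \<open>ev c = ev d\<close> by simp
    finally show "c = d"
      using ev[OF c] by simp
  qed
  have orth: "pairwise orthogonal (ev ` eigenvalues H)"
    unfolding pairwise_def orthogonal_def
  proof clarify
    fix c d
    assume c: "c \<in> eigenvalues H" and d: "d \<in> eigenvalues H" and "ev c \<noteq> ev d"
    then have "c \<noteq> d"
      by blast
    then show "inner (ev c) (ev d) = 0"
      using ev[OF c] ev[OF d] by (intro hermitian_eigenvectors_orthogonal[OF H]) auto
  qed
  have "0 \<notin> ev ` eigenvalues H"
    using ev by fastforce
  then have "finite (ev ` eigenvalues H)"
    by (intro finiteI_independent pairwise_orthogonal_independent orth)
  then show ?thesis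
    using inj
    by (simp add: finite_image_iff)
qed

lemma hermitian_max_eigenvalue:
  assumes "hermitian H"
  shows "\<exists>\<mu>. of_real \<mu> \<in> eigenvalues H \<and> (\<forall>x. inner (H *v x) x \<le> \<mu> * (norm x)\<^sup>2)"
proof -
  obtain \<mu> v where "norm v = 1" "H *v v = \<mu> *\<^sub>R v" "\<forall>x. inner (H *v x) x \<le> \<mu> * (norm x)\<^sup>2"
    using self_adjoint_max_eigenvalue[of "(*v) H"] hermitian_inner[OF assms] by auto
  moreover have "\<mu> *\<^sub>R v = complex_of_real \<mu> *s v"
    by (vector scaleR_conv_of_real)
  moreover have "v \<noteq> 0"
    using \<open>norm v = 1\<close> by auto
  ultimately show ?thesis
    unfolding eigenvalues_def by auto
qed

lemma hermitian_min_eigenvalue: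
  assumes "hermitian H"
  shows "\<exists>\<nu>. of_real \<nu> \<in> eigenvalues H \<and> (\<forall>x. \<nu> * (norm x)\<^sup>2 \<le> inner (H *v x) x)"
proof -
  have "hermitian (- H)"
    using assms by (simp add: hermitian_def adj_uminus)
  then obtain \<mu> where \<mu>: "of_real \<mu> \<in> eigenvalues (- H)"
    "\<And>x. inner ((- H) *v x) x \<le> \<mu> * (norm x)\<^sup>2"
    using hermitian_max_eigenvalue by blast
  obtain v where "v \<noteq> 0" "(- H) *v v = of_real \<mu> *s v"
    using \<mu>(1) by (auto simp: eigenvalues_def)
  moreover have "H *v v = - ((- H) *v v)"
    by (simp add: matrix_vector_mult.minus_left)
  ultimately have "of_real (- \<mu>) \<in> eigenvalues H"
    unfolding eigenvalues_def by (auto simp: vector_smult_lneg)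
  moreover have "- \<mu> * (norm x)\<^sup>2 \<le> inner (H *v x) x" for x
    using \<mu>(2)[of x] by (simp add: matrix_vector_mult.minus_left)
  ultimately show ?thesis
    by blast
qed

lemma eigenvalue_spread_le_omega_max:
  assumes "hermitian H" "of_real \<mu> \<in> eigenvalues H" "of_real \<nu> \<in> eigenvalues H"
  shows "\<mu> - \<nu> \<le> omega_max H"
proof -
  have fin: "finite (Re ` eigenvalues H)"
    using hermitian_eigenvalues_finite[OF assms(1)] by simp
  have "\<mu> \<le> Max (Re ` eigenvalues H)"
    by (rule Max_ge[OF fin], rule image_eqI[OF _ assms(2)]) simp
  moreover have "Min (Re ` eigenvalues H) \<le> \<nu>"
    by (rule Min_le[OF fin], rule image_eqI[OF _ assms(3)]) simp
  ultimately show ?thesis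
    unfolding omega_max_def by linarith
qed

lemma hermitian_shift_opnorm_le:
  assumes H: "hermitian H"
  shows "\<exists>c::real. opnorm (H - c *\<^sub>R mat 1) \<le> omega_max H / 2"
proof -
  obtain \<mu> where \<mu>: "of_real \<mu> \<in> eigenvalues H" "\<And>x. inner (H *v x) x \<le> \<mu> * (norm x)\<^sup>2"
    using hermitian_max_eigenvalue[OF H] by blast
  obtain \<nu> where \<nu>: "of_real \<nu> \<in> eigenvalues H" "\<And>x. \<nu> * (norm x)\<^sup>2 \<le> inner (H *v x) x"
    using hermitian_min_eigenvalue[OF H] by blast
  define c where "c = (\<mu> + \<nu>) / 2"
  define N where "N = H - c *\<^sub>R mat 1"
  have N_apply: "N *v x = H *v x - c *\<^sub>R x" for x
    by (simp add: N_def matrix_vector_mult.diff_left matrix_vector_mult.scaleR_left)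
  have "opnorm N \<le> (\<mu> - \<nu>) / 2"
  proof (rule opnorm_leI, rule self_adjoint_norm_le)
    show "inner (N *v x) y = inner x (N *v y)" for x y
      using hermitian_inner[OF H, of x y] by (simp add: N_apply inner_diff_left inner_diff_right)
    show "\<bar>inner (N *v x) x\<bar> \<le> (\<mu> - \<nu>) / 2 * (norm x)\<^sup>2" for x
    proof -
      have "inner (N *v x) x = inner (H *v x) x - (\<mu> * (norm x)\<^sup>2 + \<nu> * (norm x)\<^sup>2) / 2"
        by (simp add: N_apply inner_diff_left power2_norm_eq_inner c_def add_divide_distrib
            distrib_right)
      then show ?thesis
        using \<mu>(2)[of x] \<nu>(2)[of x] by (auto simp: abs_le_iff field_simps)
    qed
  qed simp
  with eigenvalue_spread_le_omega_max[OF H \<mu>(1) \<nu>(1)] show ?thesis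
    unfolding N_def by (intro exI[of _ c]) simp
qed

lemma opnorm_commutator_le:
  assumes "hermitian H"
  shows "opnorm (commutator H Z) \<le> omega_max H * opnorm Z"
proof -
  obtain c :: real where c: "opnorm (H - c *\<^sub>R mat 1) \<le> omega_max H / 2"
    using hermitian_shift_opnorm_le[OF assms] by blast
  define N where "N = H - c *\<^sub>R mat 1"
  have "commutator H Z = N ** Z - Z ** N"
    by (simp add: commutator_def N_def matrix_mult.diff_left matrix_mult.diff_right
        matrix_mult.scaleR_left matrix_mult.scaleR_right)
  also have "opnorm \<dots> \<le> opnorm N * opnorm Z + opnorm Z * opnorm N"
    by (rule order_trans[OF opnorm_diff_le
        add_mono[OF opnorm_matrix_mult_le opnorm_matrix_mult_le]])
  also have "\<dots> \<le> omega_max H * opnorm Z"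
    using mult_right_mono[OF c[folded N_def] opnorm_nonneg[of Z]] by (simp add: mult.commute)
  finally show ?thesis .
qed

lemma opnorm_iterated_commutator_le:
  assumes "hermitian H"
  shows "opnorm ((commutator (cscale \<i> H) ^^ a) Z) \<le> omega_max H ^ a * opnorm Z"
proof (induction a)
  case (Suc a)
  define Y where "Y = (commutator (cscale \<i> H) ^^ a) Z"
  have "opnorm ((commutator (cscale \<i> H) ^^ Suc a) Z) = opnorm (cscale \<i> (commutator H Y))"
    by (simp add: Y_def commutator_cscale)
  also have "\<dots> \<le> opnorm (commutator H Y)"
    using opnorm_cscale_le[of \<i>] by simp
  also have "\<dots> \<le> omega_max H * opnorm Y"
    by (rule opnorm_commutator_le[OF assms])
  also have "\<dots> \<le> omega_max H * (omega_max H ^ a * opnorm Z)"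
    using Suc by (intro mult_left_mono) (auto simp: Y_def omega_max_def)
  finally show ?case
    by simp
qed simp

section \<open>The matrix exponential\<close>

lemma has_vector_derivative_suminf:
  fixes f f' :: "nat \<Rightarrow> real \<Rightarrow> 'a::banach"
  assumes S: "open S" "convex S" "x \<in> S"
    and deriv: "\<And>n y. y \<in> S \<Longrightarrow> (f n has_vector_derivative f' n y) (at y)"
    and bound: "\<And>n y. y \<in> S \<Longrightarrow> norm (f' n y) \<le> M n" "summable M"
    and summable: "\<And>y. y \<in> S \<Longrightarrow> summable (\<lambda>n. f n y)"
  shows "((\<lambda>y. \<Sum>n. f n y) has_vector_derivative (\<Sum>n. f' n x)) (at x)"
proof -
  have unif: "uniform_limit S (\<lambda>n y. \<Sum>i<n. f' i y) (\<lambda>y. \<Sum>i. f' i y) sequentially"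
    by (rule Weierstrass_m_test[OF bound])
  have "\<exists>g. \<forall>y\<in>S. (\<lambda>n. f n y) sums g y \<and>
      (g has_derivative (\<lambda>h. h *\<^sub>R (\<Sum>i. f' i y))) (at y within S)"
  proof (rule has_derivative_series[where f' = "\<lambda>n y h. h *\<^sub>R f' n y"])
    show "(f n has_derivative (\<lambda>h. h *\<^sub>R f' n y)) (at y within S)" if "y \<in> S" for n y
      using deriv[OF that] by (simp add: has_vector_derivative_def has_derivative_at_withinI)
    show "\<forall>\<^sub>F n in sequentially. \<forall>y\<in>S. \<forall>h.
        norm ((\<Sum>i<n. h *\<^sub>R f' i y) - h *\<^sub>R (\<Sum>i. f' i y)) \<le> e * norm h" if "e > 0" for e
    proof -
      have "\<forall>\<^sub>F n in sequentially. \<forall>y\<in>S. norm ((\<Sum>i<n. f' i y) - (\<Sum>i. f' i y)) \<le> e"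
        using uniform_limitD[OF unif \<open>e > 0\<close>] by eventually_elim (simp add: dist_norm less_imp_le)
      then show ?thesis
        by eventually_elim (simp add: scaleR_sum_right[symmetric] scaleR_diff_right[symmetric]
            mult.commute[of e] mult_left_mono)
    qed
  qed (use S summable in \<open>auto simp: summable_sums\<close>)
  then obtain g where g: "\<And>y. y \<in> S \<Longrightarrow> (\<lambda>n. f n y) sums g y"
    and g': "(g has_derivative (\<lambda>h. h *\<^sub>R (\<Sum>i. f' i x))) (at x)"
    using S by (metis at_within_open)
  show ?thesis
    unfolding has_vector_derivative_def
    by (rule has_derivative_transform_within_open[OF g' S(1,3)]) (use g in \<open>simp add: sums_iff\<close>)
qed

lemma summable_exp_series:
  fixes c :: "nat \<Rightarrow> 'a::banach"
  assumes bound: "\<And>k. norm (c k) \<le> B * r ^ k"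
  shows "summable (\<lambda>k. (t ^ k / fact k) *\<^sub>R c k)"
proof (rule summable_comparison_test')
  show "summable (\<lambda>k. B * (inverse (fact k) * (\<bar>t\<bar> * r) ^ k))"
    by (intro summable_mult summable_exp)
  show "norm ((t ^ k / fact k) *\<^sub>R c k) \<le> B * (inverse (fact k) * (\<bar>t\<bar> * r) ^ k)" for k
  proof -
    have "norm ((t ^ k / fact k) *\<^sub>R c k) = (\<bar>t\<bar> ^ k / fact k) * norm (c k)"
      by (simp add: power_abs)
    also have "\<dots> \<le> (\<bar>t\<bar> ^ k / fact k) * (B * r ^ k)"
      by (intro mult_left_mono bound) simp
    finally show ?thesis
      by (simp add: power_mult_distrib divide_inverse mult_ac)
  qed
qed

lemma exp_series_has_vector_derivative:
  fixes c :: "nat \<Rightarrow> 'a::banach"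
  assumes bound: "\<And>k. norm (c k) \<le> B * r ^ k" and "0 \<le> r"
  shows "((\<lambda>t. \<Sum>k. (t ^ k / fact k) *\<^sub>R c k) has_vector_derivative
      (\<Sum>k. (t ^ k / fact k) *\<^sub>R c (Suc k))) (at t)"
proof -
  have bound_Suc: "norm (c (Suc k)) \<le> (B * r) * r ^ k" for k
    using bound[of "Suc k"] by (simp add: mult_ac)
  define f where "f k s = (s ^ Suc k / fact (Suc k)) *\<^sub>R c (Suc k)" for k s
  have "((\<lambda>s. \<Sum>k. f k s) has_vector_derivative (\<Sum>k. (t ^ k / fact k) *\<^sub>R c (Suc k))) (at t)"
  proof (rule has_vector_derivative_suminf[where S = "ball 0 (\<bar>t\<bar> + 1)"
        and M = "\<lambda>k. (B * r) * (inverse (fact k) * ((\<bar>t\<bar> + 1) * r) ^ k)"])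
    show "(f k has_vector_derivative (s ^ k / fact k) *\<^sub>R c (Suc k)) (at s)" for k s
      unfolding f_def by (auto intro!: derivative_eq_intros simp del: power_Suc simp: divide_simps)
    show "norm ((s ^ k / fact k) *\<^sub>R c (Suc k))
        \<le> (B * r) * (inverse (fact k) * ((\<bar>t\<bar> + 1) * r) ^ k)"
      if "s \<in> ball 0 (\<bar>t\<bar> + 1)" for k s
    proof -
      have "norm ((s ^ k / fact k) *\<^sub>R c (Suc k))
          \<le> ((\<bar>t\<bar> + 1) ^ k / fact k) * ((B * r) * r ^ k)"
        using that \<open>0 \<le> r\<close> bound_Suc[of k]
        by (auto simp: power_abs intro!: mult_mono divide_right_mono power_mono)
      then show ?thesis
        by (simp add: power_mult_distrib divide_inverse mult_ac)
    qed
    show "summable (\<lambda>k. (B * r) * (inverse (fact k) * ((\<bar>t\<bar> + 1) * r) ^ k))"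
      by (intro summable_mult summable_exp)
    show "summable (\<lambda>k. f k s)" for s
      unfolding f_def using summable_exp_series[OF bound, of s]
      by (rule summable_Suc_iff[THEN iffD2])
  qed auto
  moreover have "(\<Sum>k. (s ^ k / fact k) *\<^sub>R c k) = (\<Sum>k. f k s) + c 0" for s
    unfolding f_def using suminf_split_head[OF summable_exp_series[OF bound, of s]] by simp
  ultimately show ?thesis
    by (simp add: has_vector_derivative_add_const)
qed

lemma norm_mpow_le: "\<exists>B r. 0 \<le> r \<and> (\<forall>k. norm (mpow A k) \<le> B * r ^ k)"
  for A :: "'n::finite cmat"
proof -
  obtain K where K: "\<And>(X :: 'n cmat) (Y :: 'n cmat). norm (X ** Y) \<le> norm X * norm Y * K" "K > 0"
    using matrix_mult.pos_bounded by blast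
  have "norm (mpow A k) \<le> norm (mat 1 :: 'n cmat) * (K * norm A) ^ k" for k
  proof (induction k)
    case (Suc k)
    have "norm (mpow A (Suc k)) \<le> norm A * norm (mpow A k) * K"
      using K(1) by simp
    also have "\<dots> \<le> norm A * (norm (mat 1 :: 'n cmat) * (K * norm A) ^ k) * K"
      using Suc K(2) by (intro mult_right_mono mult_left_mono) auto
    finally show ?case
      by (simp add: mult_ac)
  qed simp
  then show ?thesis
    using K(2) by (intro exI[of _ "norm (mat 1 :: 'n cmat)"] exI[of _ "K * norm A"]) auto
qed

lemma mexp_scaleR: "mexp (t *\<^sub>R A) = (\<Sum>k. (t ^ k / fact k) *\<^sub>R mpow A k)"
  by (simp add: mexp_def mpow_scaleR)

lemma summable_mexp_series: "summable (\<lambda>k. (t ^ k / fact k) *\<^sub>R mpow A k)"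
  using norm_mpow_le[of A] summable_exp_series by blast

lemma mexp_commute: "A ** mexp (t *\<^sub>R A) = mexp (t *\<^sub>R A) ** A"
proof -
  have "A ** mexp (t *\<^sub>R A) = (\<Sum>k. A ** ((t ^ k / fact k) *\<^sub>R mpow A k))"
    unfolding mexp_scaleR
    by (rule bounded_linear.suminf[OF matrix_mult.bounded_linear_right summable_mexp_series])
  also have "\<dots> = (\<Sum>k. ((t ^ k / fact k) *\<^sub>R mpow A k) ** A)"
    by (simp add: matrix_mult.scaleR_left matrix_mult.scaleR_right mpow_Suc_right[symmetric])
  also have "\<dots> = mexp (t *\<^sub>R A) ** A"
    unfolding mexp_scaleR
    by (rule bounded_linear.suminf[OF matrix_mult.bounded_linear_left summable_mexp_series,
          symmetric])
  finally show ?thesis .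
qed

lemma has_vector_derivative_mexp:
  "((\<lambda>t. mexp (t *\<^sub>R A)) has_vector_derivative A ** mexp (t *\<^sub>R A)) (at t)"
proof -
  obtain B r where "\<And>k. norm (mpow A k) \<le> B * r ^ k" "0 \<le> r"
    using norm_mpow_le by blast
  then have "((\<lambda>t. mexp (t *\<^sub>R A)) has_vector_derivative
      (\<Sum>k. (t ^ k / fact k) *\<^sub>R mpow A (Suc k))) (at t)"
    unfolding mexp_scaleR by (rule exp_series_has_vector_derivative)
  moreover have "A ** mexp (t *\<^sub>R A) = (\<Sum>k. (t ^ k / fact k) *\<^sub>R mpow A (Suc k))"
    using bounded_linear.suminf[OF matrix_mult.bounded_linear_right summable_mexp_series]
    by (simp add: mexp_scaleR matrix_mult.scaleR_right)
  ultimately show ?thesis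
    by simp
qed

lemma mexp_zero: "mexp (0 :: 'n::finite cmat) = mat 1"
proof -
  have "(\<lambda>k. ((0::real) ^ k / fact k) *\<^sub>R mpow (0 :: 'n cmat) k)
      = (\<lambda>k. if k = 0 then mat 1 else 0)"
    by (auto simp: fun_eq_iff)
  then show ?thesis
    using sums_single[of 0 "\<lambda>_. mat 1 :: 'n cmat"] mexp_scaleR[of 0 "0 :: 'n cmat"]
    by (simp add: sums_iff)
qed

lemma mexp_scaleR_inverse: "mexp (t *\<^sub>R A) ** mexp (t *\<^sub>R (- A)) = mat 1"
proof -
  define F where "F s = mexp (s *\<^sub>R A) ** mexp (s *\<^sub>R (- A))" for s
  have "(F has_derivative (\<lambda>h. 0)) (at s)" for s
  proof -
    have "(F has_vector_derivative mexp (s *\<^sub>R A) ** (- A ** mexp (s *\<^sub>R (- A)))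
        + (A ** mexp (s *\<^sub>R A)) ** mexp (s *\<^sub>R (- A))) (at s)"
      unfolding F_def by (intro matrix_mult.has_vector_derivative has_vector_derivative_mexp)
    then show ?thesis
      by (simp add: has_vector_derivative_def mexp_commute matrix_mul_assoc matrix_mult.minus_left
          matrix_mult.minus_right)
  qed
  then obtain c where "\<And>s. F s = c"
    using has_derivative_zero_constant[of UNIV F] by auto
  then have "F t = F 0"
    by simp
  then show ?thesis
    by (simp add: F_def mexp_zero)
qed

lemma adj_mexp_scaleR: "adj (mexp (t *\<^sub>R A)) = mexp (t *\<^sub>R adj A)"
proof -
  have "adj (mexp (t *\<^sub>R A)) = (\<Sum>k. adj ((t ^ k / fact k) *\<^sub>R mpow A k))"
    unfolding mexp_scaleR
    by (rule bounded_linear.suminf[OF bounded_linear_adj summable_mexp_series])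
  also have "\<dots> = mexp (t *\<^sub>R adj A)"
    by (simp add: mexp_scaleR adj_mpow
        linear_scale[OF bounded_linear.linear[OF bounded_linear_adj]])
  finally show ?thesis .
qed

lemma unitary_mexp_skew_hermitian:
  assumes "adj A = - A"
  shows "unitary (mexp (t *\<^sub>R A))"
  using mexp_scaleR_inverse[of t A] mexp_scaleR_inverse[of t "- A"]
  by (simp add: unitary_def adj_mexp_scaleR assms)

section \<open>Derivatives of the rotated channels\<close>

definition Utilde_ad ::
    "(nat \<Rightarrow> 'n::finite cmat) \<Rightarrow> (nat \<Rightarrow> 'n cmat) \<Rightarrow> nat \<Rightarrow> real \<Rightarrow> nat \<Rightarrow> 'n cmat \<Rightarrow> 'n cmat"
  where "Utilde_ad V H a \<theta> k A =
    mexp (\<theta> *\<^sub>R cscale \<i> (H k)) ** (commutator (cscale \<i> (H k)) ^^ a) (adj (V k) ** A ** V k)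
      ** mexp (\<theta> *\<^sub>R - cscale \<i> (H k))"

lemma Utilde_eq_Utilde_ad: "Utilde V H \<theta> k A = Utilde_ad V H 0 \<theta> k A"
  unfolding Utilde_def Utilde_ad_def
  by (simp add: cscale_mult_of_real cscale_uminus matrix_mul_assoc)

lemma bounded_linear_iterated_commutator: "bounded_linear (commutator X ^^ a)"
  by (induction a) (auto intro: bounded_linear_compose[OF bounded_linear_commutator] simp: id_def)

lemma bounded_linear_conj_iterated_commutator:
  "bounded_linear (\<lambda>B. (commutator X ^^ a) (adj W ** B ** W))"
  by (intro bounded_linear_compose[OF bounded_linear_iterated_commutator]
      bounded_linear_compose[OF matrix_mult.bounded_linear_left matrix_mult.bounded_linear_right])

lemma bounded_linear_Utilde_ad: "bounded_linear (Utilde_ad V H a \<theta> k)"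
  unfolding Utilde_ad_def
  by (intro bounded_linear_compose[OF matrix_mult.bounded_linear_left]
      bounded_linear_compose[OF matrix_mult.bounded_linear_right]
      bounded_linear_conj_iterated_commutator)

lemma has_vector_derivative_Utilde_ad:
  assumes "(g has_vector_derivative g') (at t)"
  shows "((\<lambda>s. Utilde_ad V H a s k (g s)) has_vector_derivative
      Utilde_ad V H (Suc a) t k (g t) + Utilde_ad V H a t k g') (at t)"
proof -
  define X where "X = cscale \<i> (H k)"
  define L where "L B = (commutator X ^^ a) (adj (V k) ** B ** V k)" for B
  have "bounded_linear L"
    unfolding L_def by (rule bounded_linear_conj_iterated_commutator)
  then have "((\<lambda>s. L (g s)) has_vector_derivative L g') (at t)"
    using assms by (rule bounded_linear.has_vector_derivative)
  then have "((\<lambda>s. mexp (s *\<^sub>R X) ** L (g s) ** mexp (s *\<^sub>R - X)) has_vector_derivative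
      (mexp (t *\<^sub>R X) ** L (g t)) ** (- X ** mexp (t *\<^sub>R - X))
      + (mexp (t *\<^sub>R X) ** L g' + (X ** mexp (t *\<^sub>R X)) ** L (g t)) ** mexp (t *\<^sub>R - X)) (at t)"
    by (intro matrix_mult.has_vector_derivative has_vector_derivative_mexp)
  moreover have "(mexp (t *\<^sub>R X) ** L (g t)) ** (- X ** mexp (t *\<^sub>R - X))
      + (mexp (t *\<^sub>R X) ** L g' + (X ** mexp (t *\<^sub>R X)) ** L (g t)) ** mexp (t *\<^sub>R - X)
    = mexp (t *\<^sub>R X) ** commutator X (L (g t)) ** mexp (t *\<^sub>R - X)
      + mexp (t *\<^sub>R X) ** L g' ** mexp (t *\<^sub>R - X)"
    by (simp add: commutator_def mexp_commute matrix_mul_assoc matrix_mult.minus_left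
        matrix_mult.minus_right matrix_mult.diff_left matrix_mult.diff_right matrix_mult.add_left
        matrix_mult.add_right algebra_simps)
  ultimately show ?thesis
    by (simp add: Utilde_ad_def X_def L_def)
qed

lemma opnorm_Utilde_ad_le:
  assumes "hermitian (H k)" "unitary (V k)"
  shows "opnorm (Utilde_ad V H a \<theta> k A) \<le> omega_max (H k) ^ a * opnorm A"
proof -
  define X where "X = cscale \<i> (H k)"
  have "adj X = - X"
    using assms(1) by (simp add: X_def adj_cscale hermitian_def cscale_uminus)
  then have "adj (- X) = - (- X)"
    by (simp add: adj_uminus)
  have "opnorm (Utilde_ad V H a \<theta> k A) \<le> opnorm ((commutator X ^^ a) (adj (V k) ** A ** V k))"
    unfolding Utilde_ad_def X_def[symmetric]
    by (intro opnorm_unitary_conj_le unitary_mexp_skew_hermitian) fact+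
  also have "\<dots> \<le> omega_max (H k) ^ a * opnorm (adj (V k) ** A ** V k)"
    unfolding X_def by (rule opnorm_iterated_commutator_le[OF assms(1)])
  also have "\<dots> \<le> omega_max (H k) ^ a * opnorm A"
    using assms(2)
    by (intro mult_left_mono opnorm_unitary_conj_le unitary_adj) (auto simp: omega_max_def)
  finally show ?thesis .
qed

lemma Utilde_deriv_eq_Utilde_ad: "Utilde_deriv V H a \<theta> k A = Utilde_ad V H a \<theta> k A"
proof -
  have "nth_deriv a (\<lambda>\<theta>. Utilde_ad V H 0 \<theta> k A) = (\<lambda>\<theta>. Utilde_ad V H a \<theta> k A)"
  proof (induction a)
    case (Suc a)
    have "((\<lambda>s. Utilde_ad V H a s k A) has_vector_derivative Utilde_ad V H (Suc a) \<theta> k A)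
        (at \<theta>)" for \<theta>
      using has_vector_derivative_Utilde_ad[where g = "\<lambda>_. A" and g' = 0,
          OF has_vector_derivative_const]
      by (simp add: linear_0[OF bounded_linear.linear[OF bounded_linear_Utilde_ad]])
    then show ?case
      by (auto simp: Suc.IH fun_eq_iff intro: vector_derivative_at)
  qed simp
  then show ?thesis
    by (simp add: Utilde_deriv_def Utilde_eq_Utilde_ad)
qed

lemma has_vector_derivative_Utilde_deriv:
  "(g has_vector_derivative g') (at t) \<Longrightarrow>
    ((\<lambda>s. Utilde_deriv V H a s k (g s)) has_vector_derivative
      Utilde_deriv V H (Suc a) t k (g t) + Utilde_deriv V H a t k g') (at t)"
  unfolding Utilde_deriv_eq_Utilde_ad by (rule has_vector_derivative_Utilde_ad)

lemma linear_Utilde_deriv: "linear (Utilde_deriv V H a \<theta> k)"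
  unfolding Utilde_deriv_eq_Utilde_ad[abs_def]
  using bounded_linear_Utilde_ad bounded_linear.linear by blast

lemma opnorm_Utilde_deriv_le:
  "hermitian (H k) \<Longrightarrow> unitary (V k) \<Longrightarrow>
    opnorm (Utilde_deriv V H a \<theta> k A) \<le> omega_max (H k) ^ a * opnorm A"
  unfolding Utilde_deriv_eq_Utilde_ad by (rule opnorm_Utilde_ad_le)

section \<open>The Leibniz rule\<close>

lemma sum_choose_Suc:
  fixes F :: "nat \<Rightarrow> nat \<Rightarrow> 'a::real_vector"
  shows "(\<Sum>i\<le>Suc p. real (Suc p choose i) *\<^sub>R F i (Suc p - i))
       = (\<Sum>i\<le>p. real (p choose i) *\<^sub>R (F (Suc i) (p - i) + F i (Suc p - i)))"
proof -
  define G where "G i = F i (Suc p - i)" for i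
  have "(\<Sum>i\<le>Suc p. real (Suc p choose i) *\<^sub>R G i)
      = (\<Sum>i\<le>p. real (p choose i) *\<^sub>R G (Suc i))
        + (G 0 + (\<Sum>i\<le>p. real (p choose Suc i) *\<^sub>R G (Suc i)))"
    by (subst sum.atMost_Suc_shift) (simp add: scaleR_add_left sum.distrib)
  also have "G 0 + (\<Sum>i\<le>p. real (p choose Suc i) *\<^sub>R G (Suc i))
      = (\<Sum>i\<le>Suc p. real (p choose i) *\<^sub>R G i)"
    unfolding sum.atMost_Suc_shift by simp
  also have "\<dots> = (\<Sum>i\<le>p. real (p choose i) *\<^sub>R G i)"
    by simp
  finally show ?thesis
    by (simp add: G_def scaleR_add_right sum.distrib Suc_diff_le)
qed

context
  fixes U :: "nat \<Rightarrow> real \<Rightarrow> 'a::real_normed_vector \<Rightarrow> 'b::real_normed_vector" and g :: "real \<Rightarrow> 'a"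
  assumes U: "\<And>i t f f'. (f has_vector_derivative f') (at t) \<Longrightarrow>
      ((\<lambda>s. U i s (f s)) has_vector_derivative U (Suc i) t (f t) + U i t f') (at t)"
    and g: "\<And>m t. (nth_deriv m g has_vector_derivative nth_deriv (Suc m) g t) (at t)"
begin

lemma has_vector_derivative_leibniz_sum:
  "((\<lambda>t. \<Sum>i\<le>p. real (p choose i) *\<^sub>R U i t (nth_deriv (p - i) g t)) has_vector_derivative
      (\<Sum>i\<le>Suc p. real (Suc p choose i) *\<^sub>R U i t (nth_deriv (Suc p - i) g t))) (at t)"
  unfolding sum_choose_Suc[where F = "\<lambda>i m. U i t (nth_deriv m g t)"]
  by (auto intro!: has_vector_derivative_sum U g
      bounded_linear.has_vector_derivative[OF bounded_linear_scaleR_right]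
      simp: Suc_diff_le simp del: nth_deriv.simps cong: sum.cong)

lemma nth_deriv_leibniz:
  "nth_deriv p (\<lambda>t. U 0 t (g t)) = (\<lambda>t. \<Sum>i\<le>p. real (p choose i) *\<^sub>R U i t (nth_deriv (p - i) g t))"
proof (induction p)
  case (Suc p)
  show ?case
    using has_vector_derivative_leibniz_sum[of p]
    by (auto simp: Suc.IH fun_eq_iff intro: vector_derivative_at)
qed simp

lemma has_vector_derivative_nth_deriv_leibniz:
  "(nth_deriv p (\<lambda>t. U 0 t (g t)) has_vector_derivative nth_deriv (Suc p) (\<lambda>t. U 0 t (g t)) t)
    (at t)"
  unfolding nth_deriv_leibniz by (rule has_vector_derivative_leibniz_sum)

end

lemma nth_deriv_const: "nth_deriv (Suc m) (\<lambda>_. c) = (\<lambda>_. 0)"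
  by (induction m) simp_all

section \<open>Multinomial expansion of the derivatives of the channel\<close>

lemma finite_multi_indices: "finite (multi_indices j p)"
proof (rule finite_subset)
  show "multi_indices j p \<subseteq> {a. \<forall>k. (k \<in> {1..j} \<longrightarrow> a k \<in> {0..p}) \<and> (k \<notin> {1..j} \<longrightarrow> a k = 0)}"
    by (auto simp: multi_indices_def intro: member_le_sum[of _ "{1..j}", simplified])
  show "finite {a. \<forall>k. (k \<in> {1..j} \<longrightarrow> a k \<in> {0..p}) \<and> (k \<notin> {1..j} \<longrightarrow> a k = (0::nat))}"
    by (rule finite_set_of_finite_funs) auto
qed

lemma multi_indices_0: "multi_indices 0 p = (if p = 0 then {\<lambda>_. 0} else {})"
  by (auto simp: multi_indices_def)

lemma sum_multi_indices_Suc: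
  "(\<Sum>b\<in>multi_indices (Suc j) p. f b) = (\<Sum>i\<le>p. \<Sum>a\<in>multi_indices j (p - i). f (a(Suc j := i)))"
proof -
  have "(\<Sum>i\<le>p. \<Sum>a\<in>multi_indices j (p - i). f (a(Suc j := i)))
      = (\<Sum>(i, a)\<in>Sigma {..p} (\<lambda>i. multi_indices j (p - i)). f (a(Suc j := i)))"
    by (rule sum.Sigma) (auto simp: finite_multi_indices)
  also have "\<dots> = (\<Sum>b\<in>multi_indices (Suc j) p. f b)"
  proof (rule sum.reindex_bij_witness[where j = "\<lambda>(i, a). a(Suc j := i)"
        and i = "\<lambda>b. (b (Suc j), b(Suc j := 0))"])
    show "(\<lambda>(i, a). a(Suc j := i)) ia \<in> multi_indices (Suc j) p"
      "(\<lambda>b. (b (Suc j), b(Suc j := 0))) ((\<lambda>(i, a). a(Suc j := i)) ia) = ia"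
      if "ia \<in> Sigma {..p} (\<lambda>i. multi_indices j (p - i))" for ia
      using that by (auto simp: multi_indices_def fun_eq_iff)
    show "(b (Suc j), b(Suc j := 0)) \<in> Sigma {..p} (\<lambda>i. multi_indices j (p - i))"
      if "b \<in> multi_indices (Suc j) p" for b
      using that by (auto simp: multi_indices_def)
  qed auto
  finally show ?thesis ..
qed

lemma multinom_fun_upd:
  assumes "i \<le> p"
  shows "multinom (Suc j) p (a(Suc j := i)) = real (p choose i) * multinom j (p - i) a"
proof -
  have "(\<Prod>k=1..Suc j. fact ((a(Suc j := i)) k) :: real)
      = (\<Prod>k=1..j. fact ((a(Suc j := i)) k)) * fact i"
    by simp
  also have "(\<Prod>k=1..j. fact ((a(Suc j := i)) k) :: real) = (\<Prod>k=1..j. fact (a k))"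
    by (intro prod.cong) auto
  finally show ?thesis
    unfolding multinom_def binomial_fact[OF assms] by (simp add: field_simps)
qed

lemma comp_derivs_0: "comp_derivs 0 V H a \<phi> A = A"
  by (simp add: comp_derivs_def)

lemma comp_derivs_Suc:
  "comp_derivs (Suc j) V H a \<phi> A = Utilde_deriv V H (a (Suc j)) \<phi> (Suc j) (comp_derivs j V H a \<phi> A)"
  by (simp add: comp_derivs_def)

lemma comp_derivs_fun_upd: "comp_derivs j V H (a(Suc j := i)) \<phi> A = comp_derivs j V H a \<phi> A"
proof -
  have "comp_derivs j V H (a(m := i)) \<phi> A = comp_derivs j V H a \<phi> A" if "j < m" for m
    using that by (induction j) (simp_all add: comp_derivs_0 comp_derivs_Suc)
  then show ?thesis
    by simp
qed

lemma Echan_0: "Echan 0 V H \<theta> A = A"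
  by (simp add: Echan_def Uparam_def)

lemma Echan_Suc:
  assumes "hermitian (H (Suc j))"
  shows "Echan (Suc j) V H \<theta> A = Utilde_deriv V H 0 \<theta> (Suc j) (Echan j V H \<theta> A)"
proof -
  define X where "X = cscale \<i> (H (Suc j))"
  have "adj X = - X"
    using assms by (simp add: X_def adj_cscale hermitian_def cscale_uminus)
  have "Uparam (Suc j) V H \<theta> = Uparam j V H \<theta> ** (V (Suc j) ** mexp (\<theta> *\<^sub>R - X))"
    by (simp add: Uparam_def X_def cscale_mult_of_real cscale_uminus)
  moreover have "adj (mexp (\<theta> *\<^sub>R - X)) = mexp (\<theta> *\<^sub>R X)"
    using adj_mexp_scaleR[of \<theta> "- X"] \<open>adj X = - X\<close> by (simp add: adj_uminus)
  moreover have "Utilde V H \<theta> (Suc j) B = mexp (\<theta> *\<^sub>R X) ** adj (V (Suc j)) ** B ** V (Suc j)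
      ** mexp (\<theta> *\<^sub>R - X)" for B
    by (simp add: Utilde_def X_def cscale_mult_of_real cscale_uminus)
  ultimately show ?thesis
    by (simp add: Echan_def Utilde_deriv_def adj_matrix_mult matrix_mul_assoc)
qed

lemma has_vector_derivative_nth_deriv_Echan:
  assumes "\<forall>k\<in>{1..j}. hermitian (H k)"
  shows "(nth_deriv m (\<lambda>\<theta>. Echan j V H \<theta> A) has_vector_derivative
      nth_deriv (Suc m) (\<lambda>\<theta>. Echan j V H \<theta> A) \<theta>) (at \<theta>)"
  using assms
proof (induction j arbitrary: m \<theta>)
  case 0
  then show ?case
    by (cases m) (simp_all add: Echan_0 nth_deriv_const del: nth_deriv.simps(2))
next
  case (Suc j)
  then show ?case
    using has_vector_derivative_nth_deriv_leibniz[where U = "\<lambda>a \<theta>. Utilde_deriv V H a \<theta> (Suc j)"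
        and g = "\<lambda>\<theta>. Echan j V H \<theta> A", OF has_vector_derivative_Utilde_deriv]
    by (simp add: Echan_Suc)
qed

lemma nth_deriv_Echan_Suc:
  assumes "\<forall>k\<in>{1..Suc j}. hermitian (H k)"
  shows "nth_deriv p (\<lambda>\<theta>. Echan (Suc j) V H \<theta> A) \<phi>
    = (\<Sum>i\<le>p. real (p choose i) *\<^sub>R
        Utilde_deriv V H i \<phi> (Suc j) (nth_deriv (p - i) (\<lambda>\<theta>. Echan j V H \<theta> A) \<phi>))"
  using assms nth_deriv_leibniz[where U = "\<lambda>a \<theta>. Utilde_deriv V H a \<theta> (Suc j)"
      and g = "\<lambda>\<theta>. Echan j V H \<theta> A", OF has_vector_derivative_Utilde_deriv
      has_vector_derivative_nth_deriv_Echan]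
  by (simp add: Echan_Suc)

lemma nth_deriv_Echan_multinomial:
  assumes "\<forall>k\<in>{1..K}. hermitian (H k)"
  shows "nth_deriv p (\<lambda>\<theta>. Echan K V H \<theta> A) \<phi>
    = (\<Sum>a\<in>multi_indices K p. multinom K p a *\<^sub>R comp_derivs K V H a \<phi> A)"
  using assms
proof (induction K arbitrary: p)
  case 0
  then show ?case
    by (cases p) (simp_all add: Echan_0 nth_deriv_const multi_indices_0 multinom_def comp_derivs_0
        del: nth_deriv.simps(2))
next
  case (Suc j)
  note linear = linear_Utilde_deriv[of V H _ \<phi> "Suc j"]
  have "nth_deriv p (\<lambda>\<theta>. Echan (Suc j) V H \<theta> A) \<phi>
      = (\<Sum>i\<le>p. \<Sum>a\<in>multi_indices j (p - i). (real (p choose i) * multinom j (p - i) a) *\<^sub>R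
          Utilde_deriv V H i \<phi> (Suc j) (comp_derivs j V H a \<phi> A))"
    using Suc by (simp add: nth_deriv_Echan_Suc Suc.IH linear_sum[OF linear] linear_scale[OF linear]
        scaleR_sum_right)
  also have "\<dots>
      = (\<Sum>b\<in>multi_indices (Suc j) p. multinom (Suc j) p b *\<^sub>R comp_derivs (Suc j) V H b \<phi> A)"
    by (simp add: sum_multi_indices_Suc multinom_fun_upd comp_derivs_Suc comp_derivs_fun_upd)
  finally show ?case .
qed

lemma opnorm_nth_deriv_Echan_le:
  assumes "\<forall>k\<in>{1..K}. hermitian (H k)" "\<forall>k\<in>{1..K}. unitary (V k)"
  shows "opnorm (nth_deriv p (\<lambda>\<theta>. Echan K V H \<theta> A) \<phi>)
    \<le> (\<Sum>k=1..K. omega_max (H k)) ^ p * opnorm A"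
  using assms
proof (induction K arbitrary: p)
  case 0
  then show ?case
    by (cases p) (simp_all add: Echan_0 nth_deriv_const opnorm_nonneg del: nth_deriv.simps(2))
next
  case (Suc j)
  define D where "D m = nth_deriv m (\<lambda>\<theta>. Echan j V H \<theta> A) \<phi>" for m
  define c where "c = omega_max (H (Suc j))"
  define s where "s = (\<Sum>k=1..j. omega_max (H k))"
  have "c \<ge> 0"
    by (simp add: c_def omega_max_def)
  have "opnorm (nth_deriv p (\<lambda>\<theta>. Echan (Suc j) V H \<theta> A) \<phi>)
      \<le> (\<Sum>i\<le>p. opnorm (real (p choose i) *\<^sub>R Utilde_deriv V H i \<phi> (Suc j) (D (p - i))))"
    using Suc.prems by (simp add: D_def nth_deriv_Echan_Suc opnorm_sum_le)
  also have "\<dots> \<le> (\<Sum>i\<le>p. real (p choose i) * (c ^ i * (s ^ (p - i) * opnorm A)))"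
  proof (intro sum_mono)
    fix i
    have "opnorm (Utilde_deriv V H i \<phi> (Suc j) (D (p - i))) \<le> c ^ i * opnorm (D (p - i))"
      using Suc.prems by (simp add: c_def opnorm_Utilde_deriv_le)
    also have "\<dots> \<le> c ^ i * (s ^ (p - i) * opnorm A)"
      using Suc \<open>c \<ge> 0\<close> by (intro mult_left_mono) (simp_all add: D_def s_def)
    finally show "opnorm (real (p choose i) *\<^sub>R Utilde_deriv V H i \<phi> (Suc j) (D (p - i)))
        \<le> real (p choose i) * (c ^ i * (s ^ (p - i) * opnorm A))"
      by (simp add: opnorm_scaleR mult_left_mono)
  qed
  also have "\<dots> = (c + s) ^ p * opnorm A"
    by (simp add: binomial_ring sum_distrib_left sum_distrib_right mult_ac)
  also have "c + s = (\<Sum>k=1..Suc j. omega_max (H k))"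
    by (simp add: c_def s_def)
  finally show ?case .
qed

theorem lemma6:
  fixes K :: nat and H V :: "nat \<Rightarrow> complex^'n::finite^'n"
  assumes herm: "\<forall>k\<in>{1..K}. hermitian (H k)"
      and unit: "\<forall>k\<in>{1..K}. unitary (V k)"
  shows "\<forall>(p::nat) (\<phi>::real) (A::complex^'n^'n).
           nth_deriv p (\<lambda>\<theta>. Echan K V H \<theta> A) \<phi>
             = (\<Sum>a\<in>multi_indices K p. multinom K p a *\<^sub>R comp_derivs K V H a \<phi> A)
         \<and> opnorm (nth_deriv p (\<lambda>\<theta>. Echan K V H \<theta> A) \<phi>)
             \<le> (\<Sum>k=1..K. 2 * omega_max (H k)) ^ p * opnorm A"
proof (intro allI conjI)
  fix p :: nat and \<phi> :: real and A :: "complex^'n^'n"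
  show "nth_deriv p (\<lambda>\<theta>. Echan K V H \<theta> A) \<phi>
      = (\<Sum>a\<in>multi_indices K p. multinom K p a *\<^sub>R comp_derivs K V H a \<phi> A)"
    using herm by (rule nth_deriv_Echan_multinomial)
  have "(\<Sum>k=1..K. omega_max (H k)) ^ p \<le> (\<Sum>k=1..K. 2 * omega_max (H k)) ^ p"
    by (intro power_mono sum_mono sum_nonneg) (simp_all add: omega_max_def)
  then show "opnorm (nth_deriv p (\<lambda>\<theta>. Echan K V H \<theta> A) \<phi>)
      \<le> (\<Sum>k=1..K. 2 * omega_max (H k)) ^ p * opnorm A"
    using opnorm_nth_deriv_Echan_le[OF herm unit] opnorm_nonneg
    by (meson mult_right_mono order_trans)
qed

end
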